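(* Let $\lambda=(n_1,n_2)$ be a two-row shape with $n_1\ge n_2\ge 1$ and $n_1\ge 2$, and let $\rho$ be a density on $\lambda$ with positive entries $\rho_{1,j}=a_j$ ($1\le j\le n_1$) and $\rho_{2,j}=b_j$ ($1\le j\le n_2$); set $b_j=0$ for $n_2<j\le n_1$. Then $$|\mathrm{SVT}(\lambda,\rho)|=\sum_{(i_1,\dots,i_{n_1-1})\preceq(b_1,\dots,b_{n_1-1})}\ \prod_{j=1}^{n_1-1}\binom{a_{j+1}+i_j-1}{i_j},$$ where the sum ranges over all $(n_1-1)$-tuples of nonnegative integers $(i_1,\dots,i_{n_1-1})$ with $i_1+\dots+i_\ell\le b_1+\dots+b_\ell$ for every $1\le\ell\le n_1-1$.
   Context: A density on a shape $\lambda$ is an assignment of a nonnegative integer $\rho_{i,j}$ to every cell $(i,j)$ (row $i$, column $j$); let $N=\sum\rho_{i,j}$. A standard set-valued Young tableau of shape $\lambda$ and density $\rho$ assigns to each cell $(i,j)$ a set $S_{i,j}$ with $|S_{i,j}|=\rho_{i,j}$, the sets partitioning $[N]$, such that every element of $S_{i,j}$ is smaller than every element of $S_{i,j+1}$ and of $S_{i+1,j}$ whenever those cells exist. $\mathrm{SVT}(\lambda,\rho)$ is the set of these tableaux. For tuples of nonnegative integers, $\vec x\preceq\vec y$ means $x_1+\dots+x_\ell\le y_1+\dots+y_\ell$ for all $\ell$. *)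

theory Defs
  imports Main
begin

text \<open>A shape is given by its list of row lengths [lambda_1, lambda_2, ...].
  Cells are 1-indexed pairs (row i, column j).\<close>

definition cells :: "nat list \<Rightarrow> (nat \<times> nat) set" where
  "cells lam = {(i, j). 1 \<le> i \<and> i \<le> length lam \<and> 1 \<le> j \<and> j \<le> lam ! (i - 1)}"

definition dens_total :: "nat list \<Rightarrow> (nat \<times> nat \<Rightarrow> nat) \<Rightarrow> nat" where
  "dens_total lam rho = (\<Sum>c\<in>cells lam. rho c)"

text \<open>A tableau is a function from cells to sets; it is normalised to the empty set
  outside the shape so that the collection is a set of genuine objects.\<close>

definition SVT :: "nat list \<Rightarrow> (nat \<times> nat \<Rightarrow> nat) \<Rightarrow> (nat \<times> nat \<Rightarrow> nat set) set" where
  "SVT lam rho = {S.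
     (\<forall>c. c \<notin> cells lam \<longrightarrow> S c = {}) \<and>
     (\<forall>c\<in>cells lam. finite (S c) \<and> card (S c) = rho c) \<and>
     (\<forall>c\<in>cells lam. \<forall>d\<in>cells lam. c \<noteq> d \<longrightarrow> S c \<inter> S d = {}) \<and>
     (\<Union>c\<in>cells lam. S c) = {1..dens_total lam rho} \<and>
     (\<forall>i j. (i, j) \<in> cells lam \<longrightarrow>
        ((i, j + 1) \<in> cells lam \<longrightarrow> (\<forall>x\<in>S (i, j). \<forall>y\<in>S (i, j + 1). x < y)) \<and>
        ((i + 1, j) \<in> cells lam \<longrightarrow> (\<forall>x\<in>S (i, j). \<forall>y\<in>S (i + 1, j). x < y)))}"

end

theory Submission
  imports Defs
begin

text \<open>The largest entry N of a tableau with positive density sits in a corner cell, and removing it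
  is a bijection onto the tableaux whose density has that corner lowered by one. For two rows with
  density lists al, bl this gives svt2 al bl = svt2 (dec_last al) bl + svt2 al (dec_last bl), each
  term present only when its corner exists. Peeling the second row from its end passes through the
  truncations trunc_sum bl w, so svt2 al bl is the sum over w of the number M al (trunc_sum bl w) of
  tableaux whose maximum lies in the first row. Peeling the last first-row entry x one unit at a time
  and applying Pascal's rule yields
  M (al @ [x]) (trunc_sum bl w) = (sum over v \<le> w of C(x - 1 + w - v, w - v) M al (trunc_sum bl v)),
  and unrolling this along the first row gives exactly the sum of products of binomials over the
  tuples dominated by bl.\<close>

section \<open>Removing the largest entry\<close>

definition next_cell :: "nat \<times> nat \<Rightarrow> nat \<times> nat \<Rightarrow> bool" where
  "next_cell c d \<longleftrightarrow> d = (fst c, snd c + 1) \<or> d = (fst c + 1, snd c)"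

definition corners :: "nat list \<Rightarrow> (nat \<times> nat) set" where
  "corners lam = {c \<in> cells lam. \<forall>d. next_cell c d \<longrightarrow> d \<notin> cells lam}"

lemma finite_cells: "finite (cells lam)"
proof (rule finite_subset)
  show "cells lam \<subseteq> {..length lam} \<times> {..sum_list lam}"
  proof
    fix c assume "c \<in> cells lam"
    then obtain i j where "c = (i, j)" "1 \<le> i" "i \<le> length lam" "j \<le> lam ! (i - 1)"
      unfolding cells_def by auto
    moreover have "lam ! (i - 1) \<le> sum_list lam" using calculation by (intro elem_le_sum_list) auto
    ultimately show "c \<in> {..length lam} \<times> {..sum_list lam}" by auto
  qed
qed simp

lemma SVT_iff:
  "S \<in> SVT lam r \<longleftrightarrow>
     (\<forall>c. c \<notin> cells lam \<longrightarrow> S c = {}) \<and>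
     (\<forall>c\<in>cells lam. finite (S c) \<and> card (S c) = r c) \<and>
     (\<forall>c\<in>cells lam. \<forall>d\<in>cells lam. c \<noteq> d \<longrightarrow> S c \<inter> S d = {}) \<and>
     (\<Union>c\<in>cells lam. S c) = {1..dens_total lam r} \<and>
     (\<forall>c\<in>cells lam. \<forall>d\<in>cells lam. next_cell c d \<longrightarrow> (\<forall>x\<in>S c. \<forall>y\<in>S d. x < y))"
proof -
  have "(\<forall>i j. (i, j) \<in> cells lam \<longrightarrow>
        ((i, j + 1) \<in> cells lam \<longrightarrow> (\<forall>x\<in>S (i, j). \<forall>y\<in>S (i, j + 1). x < y)) \<and>
        ((i + 1, j) \<in> cells lam \<longrightarrow> (\<forall>x\<in>S (i, j). \<forall>y\<in>S (i + 1, j). x < y)))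
      \<longleftrightarrow> (\<forall>c\<in>cells lam. \<forall>d\<in>cells lam. next_cell c d \<longrightarrow> (\<forall>x\<in>S c. \<forall>y\<in>S d. x < y))"
    (is "?pairs \<longleftrightarrow> ?cells")
  proof
    assume pairs: ?pairs
    show ?cells
    proof (intro ballI impI)
      fix c d x y
      assume "c \<in> cells lam" "d \<in> cells lam" "next_cell c d" "x \<in> S c" "y \<in> S d"
      then show "x < y" using pairs[rule_format, of "fst c" "snd c"] unfolding next_cell_def by auto
    qed
  qed (auto simp: next_cell_def)
  then show ?thesis unfolding SVT_def mem_Collect_eq by (simp only:)
qed

lemma SVT_memI:
  assumes "\<And>c. c \<notin> cells lam \<Longrightarrow> S c = {}"
    and "\<And>c. c \<in> cells lam \<Longrightarrow> finite (S c) \<and> card (S c) = r c"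
    and "\<And>c d. c \<in> cells lam \<Longrightarrow> d \<in> cells lam \<Longrightarrow> c \<noteq> d \<Longrightarrow> S c \<inter> S d = {}"
    and "(\<Union>c\<in>cells lam. S c) = {1..dens_total lam r}"
    and "\<And>c d x y. c \<in> cells lam \<Longrightarrow> d \<in> cells lam \<Longrightarrow> next_cell c d \<Longrightarrow> x \<in> S c \<Longrightarrow> y \<in> S d \<Longrightarrow> x < y"
  shows "S \<in> SVT lam r"
  unfolding SVT_iff using assms by (intro conjI allI ballI impI) auto

lemma SVT_memD:
  assumes "S \<in> SVT lam r"
  shows SVT_outside: "c \<notin> cells lam \<Longrightarrow> S c = {}"
    and SVT_finite_entry: "c \<in> cells lam \<Longrightarrow> finite (S c)"
    and SVT_card_entry: "c \<in> cells lam \<Longrightarrow> card (S c) = r c"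
    and SVT_disjoint: "c \<in> cells lam \<Longrightarrow> d \<in> cells lam \<Longrightarrow> c \<noteq> d \<Longrightarrow> S c \<inter> S d = {}"
    and SVT_Union: "(\<Union>c\<in>cells lam. S c) = {1..dens_total lam r}"
    and SVT_less: "c \<in> cells lam \<Longrightarrow> d \<in> cells lam \<Longrightarrow> next_cell c d \<Longrightarrow> x \<in> S c \<Longrightarrow> y \<in> S d \<Longrightarrow> x < y"
  using assms unfolding SVT_iff by (simp_all, metis prod.collapse)

lemma SVT_entry_cell: "S \<in> SVT lam r \<Longrightarrow> x \<in> S c \<Longrightarrow> c \<in> cells lam"
  using SVT_outside by fastforce

lemma SVT_entry_range:
  assumes "S \<in> SVT lam r" "x \<in> S c"
  shows "1 \<le> x" "x \<le> dens_total lam r"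
proof -
  have "c \<in> cells lam" using SVT_entry_cell[OF assms] .
  then show "1 \<le> x" "x \<le> dens_total lam r" using SVT_Union[OF assms(1)] assms(2) by auto
qed

lemma SVT_cong:
  assumes "\<And>c. c \<in> cells lam \<Longrightarrow> r c = r' c"
  shows "SVT lam r = SVT lam r'"
proof -
  have "dens_total lam r = dens_total lam r'"
    unfolding dens_total_def using assms by (rule sum.cong[OF refl])
  then show ?thesis unfolding SVT_def using assms by auto
qed

lemma finite_SVT: "finite (SVT lam r)"
proof (rule finite_subset)
  let ?N = "dens_total lam r"
  show "SVT lam r \<subseteq> {S. \<forall>c. (c \<in> cells lam \<longrightarrow> S c \<in> Pow {1..?N}) \<and> (c \<notin> cells lam \<longrightarrow> S c = {})}"
    unfolding SVT_def by auto
  show "finite {S. \<forall>c. (c \<in> cells lam \<longrightarrow> S c \<in> Pow {1..?N}) \<and> (c \<notin> cells lam \<longrightarrow> S c = {})}"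
    by (rule finite_set_of_finite_funs) (simp_all add: finite_cells)
qed

text \<open>With positive densities every cell is nonempty, so the largest entry cannot have a right
  or lower neighbour.\<close>

lemma SVT_max_in_corner:
  assumes S: "S \<in> SVT lam r" and pos: "\<And>c. c \<in> cells lam \<Longrightarrow> 0 < r c"
    and ne: "cells lam \<noteq> {}"
  obtains c where "c \<in> corners lam" "dens_total lam r \<in> S c"
proof -
  let ?N = "dens_total lam r"
  obtain c0 where c0: "c0 \<in> cells lam" using ne by blast
  have "0 < r c0" using pos c0 by blast
  then have "?N \<ge> 1"
    unfolding dens_total_def using c0 finite_cells member_le_sum[of c0 "cells lam" r] by fastforce
  then have "?N \<in> (\<Union>c\<in>cells lam. S c)" using SVT_Union[OF S] by simp
  then obtain c where c: "c \<in> cells lam" "?N \<in> S c" by blast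
  have "d \<notin> cells lam" if "next_cell c d" for d
  proof
    assume d: "d \<in> cells lam"
    then have "S d \<noteq> {}"
      using pos[OF d] SVT_card_entry[OF S d] by (metis card.empty less_numeral_extra(3))
    then obtain y where y: "y \<in> S d" by blast
    have "?N < y" using SVT_less[OF S c(1) d that c(2) y] .
    with SVT_entry_range(2)[OF S y] show False by simp
  qed
  with c show thesis using that unfolding corners_def by blast
qed

locale max_entry_removal =
  fixes lam lam' :: "nat list" and r r' :: "nat \<times> nat \<Rightarrow> nat" and c :: "nat \<times> nat"
  assumes corner: "c \<in> corners lam"
    and dens_pos: "0 < r c"
    and cells_removed: "cells lam' = (if r c = 1 then cells lam - {c} else cells lam)"
    and dens_removed: "\<And>d. d \<in> cells lam' \<Longrightarrow> r' d = (if d = c then r c - 1 else r d)"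
begin

abbreviation N :: nat where "N \<equiv> dens_total lam r"

lemma corner_cell: "c \<in> cells lam"
  using corner unfolding corners_def by blast

lemma cells_removed_subset: "cells lam' \<subseteq> cells lam"
  using cells_removed by auto

lemma cells_removed_other: "d \<in> cells lam \<Longrightarrow> d \<noteq> c \<Longrightarrow> d \<in> cells lam'"
  using cells_removed by auto

lemma dens_total_removed: "dens_total lam' r' = N - 1" and dens_total_pos: "1 \<le> N"
proof -
  have N: "N = r c + (\<Sum>d\<in>cells lam - {c}. r d)"
    unfolding dens_total_def using finite_cells corner_cell by (rule sum.remove)
  then show "1 \<le> N" using dens_pos by simp
  have "dens_total lam' r' = (r c - 1) + (\<Sum>d\<in>cells lam - {c}. r d)"
  proof (cases "r c = 1")
    case True
    then show ?thesis
      unfolding dens_total_def cells_removed using dens_removed cells_removed by (auto intro: sum.cong)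
  next
    case False
    then have "dens_total lam' r' = (\<Sum>d\<in>cells lam. if d = c then r c - 1 else r d)"
      unfolding dens_total_def using dens_removed cells_removed by (auto intro: sum.cong)
    also have "\<dots> = (r c - 1) + (\<Sum>d\<in>cells lam - {c}. r d)"
      using finite_cells corner_cell by (simp add: sum.remove)
    finally show ?thesis .
  qed
  with N show "dens_total lam' r' = N - 1" using dens_pos by simp
qed

lemma remove_max_SVT:
  assumes S: "S \<in> SVT lam r" and max: "N \<in> S c"
  shows "S(c := S c - {N}) \<in> SVT lam' r'"
proof (rule SVT_memI)
  let ?S' = "S(c := S c - {N})"
  have max_only: "N \<notin> S d" if "d \<in> cells lam" "d \<noteq> c" for d
    using SVT_disjoint[OF S that(1) corner_cell that(2)] max by blast
  have corner_singleton: "S c = {N}" if "r c = 1"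
    using SVT_card_entry[OF S corner_cell] that max by (auto simp: card_1_singleton_iff)
  show "?S' d = {}" if "d \<notin> cells lam'" for d
  proof (cases "d \<in> cells lam")
    case True
    then have "d = c" "r c = 1" using that cells_removed by (auto split: if_splits)
    then show ?thesis using corner_singleton by simp
  next
    case False
    then show ?thesis using SVT_outside[OF S False] corner_cell by auto
  qed
  show "finite (?S' d) \<and> card (?S' d) = r' d" if d: "d \<in> cells lam'" for d
  proof -
    have "d \<in> cells lam" using d cells_removed_subset by blast
    then have "finite (S d)" "card (S d) = r d"
      using SVT_finite_entry[OF S] SVT_card_entry[OF S] by blast+
    then show ?thesis using dens_removed[OF d] max by auto
  qed
  show "?S' d \<inter> ?S' e = {}" if "d \<in> cells lam'" "e \<in> cells lam'" "d \<noteq> e" for d e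
  proof -
    have "S d \<inter> S e = {}" using SVT_disjoint[OF S] that cells_removed_subset by blast
    then show ?thesis by auto
  qed
  show "x < y" if "d \<in> cells lam'" "e \<in> cells lam'" "next_cell d e" "x \<in> ?S' d" "y \<in> ?S' e"
    for d e x y
  proof -
    have "x \<in> S d" "y \<in> S e" using that(4,5) by (auto split: if_splits)
    then show ?thesis using SVT_less[OF S _ _ that(3)] that(1,2) cells_removed_subset by blast
  qed
  have "(\<Union>d\<in>cells lam'. ?S' d) = (\<Union>d\<in>cells lam. S d) - {N}"
  proof
    show "(\<Union>d\<in>cells lam'. ?S' d) \<subseteq> (\<Union>d\<in>cells lam. S d) - {N}"
      using cells_removed_subset max_only by auto
    show "(\<Union>d\<in>cells lam. S d) - {N} \<subseteq> (\<Union>d\<in>cells lam'. ?S' d)"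
      using corner_singleton cells_removed by (fastforce split: if_splits)
  qed
  then show "(\<Union>d\<in>cells lam'. ?S' d) = {1..dens_total lam' r'}"
    using SVT_Union[OF S] dens_total_removed dens_total_pos by auto
qed

lemma insert_max_SVT:
  assumes S': "S' \<in> SVT lam' r'"
  shows "S'(c := insert N (S' c)) \<in> SVT lam r"
proof (rule SVT_memI)
  let ?S = "S'(c := insert N (S' c))"
  have below_max: "x < N" if "x \<in> S' d" for x d
    using SVT_entry_range[OF S' that] dens_total_removed dens_total_pos by simp
  show "?S d = {}" if "d \<notin> cells lam" for d
  proof -
    have "d \<noteq> c" "d \<notin> cells lam'" using that corner_cell cells_removed_subset by auto
    then show ?thesis using SVT_outside[OF S' \<open>d \<notin> cells lam'\<close>] by simp
  qed
  show "finite (?S d) \<and> card (?S d) = r d" if d: "d \<in> cells lam" for d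
  proof (cases "d = c")
    case True
    show ?thesis
    proof (cases "r c = 1")
      case True
      then have "c \<notin> cells lam'" using cells_removed by simp
      then have "S' c = {}" by (rule SVT_outside[OF S'])
      then show ?thesis using \<open>d = c\<close> True by simp
    next
      case False
      then have c': "c \<in> cells lam'" using cells_removed corner_cell by simp
      have "N \<notin> S' c" using below_max by blast
      then show ?thesis using \<open>d = c\<close> False dens_pos dens_removed[OF c']
          SVT_finite_entry[OF S' c'] SVT_card_entry[OF S' c'] by simp
    qed
  next
    case False
    then have d': "d \<in> cells lam'" using d cells_removed_other by blast
    then show ?thesis using False dens_removed[OF d'] SVT_finite_entry[OF S' d']
        SVT_card_entry[OF S' d'] by simp
  qed
  show "?S d \<inter> ?S e = {}" if "d \<in> cells lam" "e \<in> cells lam" "d \<noteq> e" for d e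
  proof -
    have "S' d \<inter> S' e = {}"
      using SVT_disjoint[OF S' _ _ that(3)] SVT_entry_cell[OF S'] by blast
    moreover have "N \<notin> S' d" "N \<notin> S' e" using below_max by blast+
    ultimately show ?thesis using that(3) by auto
  qed
  show "x < y" if d: "d \<in> cells lam" and e: "e \<in> cells lam" and de: "next_cell d e"
    and x: "x \<in> ?S d" and y: "y \<in> ?S e" for d e x y
  proof -
    have "d \<noteq> c" using corner e de unfolding corners_def by blast
    then have x': "x \<in> S' d" using x by simp
    show "x < y"
    proof (cases "y = N")
      case False
      then have y': "y \<in> S' e" using y by (auto split: if_splits)
      show ?thesis using SVT_less[OF S' SVT_entry_cell[OF S' x'] SVT_entry_cell[OF S' y'] de x' y'] .
    qed (use below_max x' in blast)
  qed
  have "(\<Union>d\<in>cells lam. ?S d) = insert N (\<Union>d\<in>cells lam'. S' d)"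
  proof
    show "(\<Union>d\<in>cells lam. ?S d) \<subseteq> insert N (\<Union>d\<in>cells lam'. S' d)"
    proof
      fix x assume "x \<in> (\<Union>d\<in>cells lam. ?S d)"
      then obtain d where "x \<in> ?S d" by blast
      then have "x = N \<or> x \<in> S' d" by (cases "d = c") auto
      then show "x \<in> insert N (\<Union>d\<in>cells lam'. S' d)" using SVT_entry_cell[OF S'] by blast
    qed
    show "insert N (\<Union>d\<in>cells lam'. S' d) \<subseteq> (\<Union>d\<in>cells lam. ?S d)"
      using corner_cell cells_removed_subset by force
  qed
  then show "(\<Union>d\<in>cells lam. ?S d) = {1..N}"
    using SVT_Union[OF S'] dens_total_removed dens_total_pos by auto
qed

lemma card_SVT_max_at_corner: "card {S \<in> SVT lam r. N \<in> S c} = card (SVT lam' r')"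
proof (rule bij_betw_same_card[of "\<lambda>S. S(c := S c - {N})"],
       rule bij_betw_byWitness[where f' = "\<lambda>S'. S'(c := insert N (S' c))"])
  show "\<forall>S\<in>{S \<in> SVT lam r. N \<in> S c}. (\<lambda>S'. S'(c := insert N (S' c))) (S(c := S c - {N})) = S"
    by (auto simp: insert_absorb)
  have "N \<notin> S' c" if "S' \<in> SVT lam' r'" for S'
    using SVT_entry_range(2)[OF that] dens_total_removed dens_total_pos by fastforce
  then show "\<forall>S'\<in>SVT lam' r'. (\<lambda>S. S(c := S c - {N})) (S'(c := insert N (S' c))) = S'"
    by auto
qed (use remove_max_SVT insert_max_SVT in auto)

end

lemma card_SVT_sum_corners:
  assumes pos: "\<And>c. c \<in> cells lam \<Longrightarrow> 0 < r c" and ne: "cells lam \<noteq> {}"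
  shows "card (SVT lam r) = (\<Sum>c\<in>corners lam. card {S \<in> SVT lam r. dens_total lam r \<in> S c})"
proof -
  let ?N = "dens_total lam r"
  let ?A = "\<lambda>c. {S \<in> SVT lam r. ?N \<in> S c}"
  have "SVT lam r = (\<Union>c\<in>corners lam. ?A c)"
  proof
    show "SVT lam r \<subseteq> (\<Union>c\<in>corners lam. ?A c)"
    proof
      fix S assume S: "S \<in> SVT lam r"
      then obtain c where "c \<in> corners lam" "?N \<in> S c" using SVT_max_in_corner[OF S pos ne] by blast
      with S show "S \<in> (\<Union>c\<in>corners lam. ?A c)" by blast
    qed
  qed blast
  moreover have "finite (corners lam)"
    using finite_cells unfolding corners_def by simp
  moreover have "?A c \<inter> ?A d = {}" if "c \<in> corners lam" "d \<in> corners lam" "c \<noteq> d" for c d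
  proof -
    have "c \<in> cells lam" "d \<in> cells lam" using that(1,2) unfolding corners_def by blast+
    then show ?thesis using SVT_disjoint[of _ lam r c d] that(3) by blast
  qed
  ultimately show ?thesis
    using card_UN_disjoint[of "corners lam" ?A] finite_SVT by simp
qed

section \<open>Two-row tableaux\<close>

lemma cells_two_rows [simp]:
  "(i, j) \<in> cells [n1, n2] \<longleftrightarrow> 1 \<le> j \<and> (i = 1 \<and> j \<le> n1 \<or> i = 2 \<and> j \<le> n2)"
  unfolding cells_def by (cases i; cases "i - 1") auto

lemma corners_two_rows:
  assumes "n2 \<le> n1"
  shows "corners [n1, n2] = (if n2 < n1 then {(1, n1)} else {}) \<union> (if 0 < n2 then {(2, n2)} else {})"
proof (rule set_eqI)
  fix c :: "nat \<times> nat"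
  obtain i j where c: "c = (i, j)" by fastforce
  have "c \<in> corners [n1, n2] \<longleftrightarrow>
      (i, j) \<in> cells [n1, n2] \<and> (i, j + 1) \<notin> cells [n1, n2] \<and> (i + 1, j) \<notin> cells [n1, n2]"
    unfolding corners_def next_cell_def c by auto
  then show "c \<in> corners [n1, n2] \<longleftrightarrow>
      c \<in> (if n2 < n1 then {(1, n1)} else {}) \<union> (if 0 < n2 then {(2, n2)} else {})"
    using assms unfolding c by auto
qed

definition two_row_dens :: "nat list \<Rightarrow> nat list \<Rightarrow> nat \<times> nat \<Rightarrow> nat" where
  "two_row_dens al bl = (\<lambda>(i, j). if i = 1 then al ! (j - 1) else if i = 2 then bl ! (j - 1) else 0)"

definition svt2 :: "nat list \<Rightarrow> nat list \<Rightarrow> nat" where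
  "svt2 al bl = card (SVT [length al, length bl] (two_row_dens al bl))"

definition dec_last :: "nat list \<Rightarrow> nat list" where
  "dec_last xs = (if last xs \<le> 1 then butlast xs else butlast xs @ [last xs - 1])"

lemma length_dec_last:
  "xs \<noteq> [] \<Longrightarrow> 0 \<notin> set xs \<Longrightarrow> length (dec_last xs) = (if last xs = 1 then length xs - 1 else length xs)"
  by (cases xs rule: rev_cases) (auto simp: dec_last_def)

lemma nth_dec_last:
  assumes "xs \<noteq> []" "k < length (dec_last xs)"
  shows "dec_last xs ! k = (if k = length xs - 1 then last xs - 1 else xs ! k)"
  using assms unfolding dec_last_def by (auto simp: nth_append nth_butlast split: if_splits)

lemma zero_notin_dec_last: "0 \<notin> set xs \<Longrightarrow> 0 \<notin> set (dec_last xs)"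
  unfolding dec_last_def by (auto dest: in_set_butlastD)

lemma dec_last_snoc: "dec_last (xs @ [x]) = (if x \<le> 1 then xs else xs @ [x - 1])"
  unfolding dec_last_def by simp

lemma dec_last_Cons: "ys \<noteq> [] \<Longrightarrow> dec_last (x # ys) = x # dec_last ys"
  unfolding dec_last_def by auto

lemma two_row_dens_pos:
  "0 \<notin> set al \<Longrightarrow> 0 \<notin> set bl \<Longrightarrow> c \<in> cells [length al, length bl] \<Longrightarrow> 0 < two_row_dens al bl c"
proof -
  assume al: "0 \<notin> set al" and bl: "0 \<notin> set bl" and c: "c \<in> cells [length al, length bl]"
  have nth_pos: "0 < xs ! k" if "0 \<notin> set xs" "k < length xs" for xs :: "nat list" and k
    using that nth_mem by (metis gr0I)
  obtain i j where "c = (i, j)" by fastforce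
  then show "0 < two_row_dens al bl c"
    using c nth_pos[OF al, of "j - 1"] nth_pos[OF bl, of "j - 1"] unfolding two_row_dens_def by auto
qed
lemma card_SVT2_max_in_row1:
  assumes al: "al \<noteq> []" "0 \<notin> set al" and len: "length bl < length al"
  shows "card {S \<in> SVT [length al, length bl] (two_row_dens al bl).
      dens_total [length al, length bl] (two_row_dens al bl) \<in> S (1, length al)} = svt2 (dec_last al) bl"
proof -
  have last_dens: "two_row_dens al bl (1, length al) = last al"
    using al(1) unfolding two_row_dens_def by (simp add: last_conv_nth)
  interpret max_entry_removal "[length al, length bl]" "[length (dec_last al), length bl]"
    "two_row_dens al bl" "two_row_dens (dec_last al) bl" "(1, length al)"
  proof
    show "(1, length al) \<in> corners [length al, length bl]"
      using corners_two_rows[of "length bl" "length al"] len by simp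
    show "0 < two_row_dens al bl (1, length al)"
      using last_dens last_in_set[OF al(1)] al(2) by (auto intro: gr0I)
    show "cells [length (dec_last al), length bl] = (if two_row_dens al bl (1, length al) = 1
        then cells [length al, length bl] - {(1, length al)} else cells [length al, length bl])"
      using length_dec_last[OF al] last_dens len by (auto simp: set_eq_iff)
    show "two_row_dens (dec_last al) bl d = (if d = (1, length al) then two_row_dens al bl (1, length al) - 1
        else two_row_dens al bl d)" if "d \<in> cells [length (dec_last al), length bl]" for d
      using that length_dec_last[OF al] nth_dec_last[OF al(1)] last_dens
      unfolding two_row_dens_def by (cases d) (auto split: if_splits)
  qed
  show ?thesis unfolding svt2_def by (rule card_SVT_max_at_corner)
qed

lemma card_SVT2_max_in_row2:
  assumes bl: "bl \<noteq> []" "0 \<notin> set bl" and len: "length bl \<le> length al"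
  shows "card {S \<in> SVT [length al, length bl] (two_row_dens al bl).
      dens_total [length al, length bl] (two_row_dens al bl) \<in> S (2, length bl)} = svt2 al (dec_last bl)"
proof -
  have last_dens: "two_row_dens al bl (2, length bl) = last bl"
    using bl(1) unfolding two_row_dens_def by (simp add: last_conv_nth)
  interpret max_entry_removal "[length al, length bl]" "[length al, length (dec_last bl)]"
    "two_row_dens al bl" "two_row_dens al (dec_last bl)" "(2, length bl)"
  proof
    show "(2, length bl) \<in> corners [length al, length bl]"
      using corners_two_rows[of "length bl" "length al"] len bl(1) by simp
    show "0 < two_row_dens al bl (2, length bl)"
      using last_dens last_in_set[OF bl(1)] bl(2) by (auto intro: gr0I)
    show "cells [length al, length (dec_last bl)] = (if two_row_dens al bl (2, length bl) = 1
        then cells [length al, length bl] - {(2, length bl)} else cells [length al, length bl])"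
      using length_dec_last[OF bl] last_dens by (auto simp: set_eq_iff)
    show "two_row_dens al (dec_last bl) d = (if d = (2, length bl) then two_row_dens al bl (2, length bl) - 1
        else two_row_dens al bl d)" if "d \<in> cells [length al, length (dec_last bl)]" for d
      using that length_dec_last[OF bl] nth_dec_last[OF bl(1)] last_dens
      unfolding two_row_dens_def by (cases d) (auto split: if_splits)
  qed
  show ?thesis unfolding svt2_def by (rule card_SVT_max_at_corner)
qed

lemma svt2_recurrence:
  assumes al: "al \<noteq> []" "0 \<notin> set al" and bl: "0 \<notin> set bl" and len: "length bl \<le> length al"
  shows "svt2 al bl = (if length bl < length al then svt2 (dec_last al) bl else 0)
                    + (if bl = [] then 0 else svt2 al (dec_last bl))"
proof -
  let ?lam = "[length al, length bl]" and ?r = "two_row_dens al bl"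
  let ?A = "\<lambda>c. card {S \<in> SVT ?lam ?r. dens_total ?lam ?r \<in> S c}"
  have "(1, 1) \<in> cells ?lam" using al(1) by (simp add: Suc_le_eq)
  then have "svt2 al bl = (\<Sum>c\<in>corners ?lam. ?A c)"
    unfolding svt2_def using card_SVT_sum_corners two_row_dens_pos[OF al(2) bl] by blast
  also have "\<dots> = (if length bl < length al then ?A (1, length al) else 0)
                  + (if bl = [] then 0 else ?A (2, length bl))"
    unfolding corners_two_rows[OF len] by (cases "bl = []"; cases "length bl < length al") auto
  also have "\<dots> = (if length bl < length al then svt2 (dec_last al) bl else 0)
                  + (if bl = [] then 0 else svt2 al (dec_last bl))"
    using card_SVT2_max_in_row1[OF al, of bl] card_SVT2_max_in_row2[OF _ bl len] by presburger
  finally show ?thesis .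
qed

lemma svt2_Nil: "svt2 [] [] = 1"
proof -
  have "cells [0, 0] = {}" by auto
  then have "SVT [0, 0] (two_row_dens [] []) = {\<lambda>_. {}}"
    unfolding SVT_def dens_total_def by auto
  then show ?thesis unfolding svt2_def by simp
qed

lemma svt2_one_row: "0 \<notin> set al \<Longrightarrow> svt2 al [] = 1"
proof (induction "sum_list al" arbitrary: al rule: less_induct)
  case less
  show ?case
  proof (cases al rule: rev_cases)
    case (snoc ys y)
    then have "svt2 al [] = svt2 (dec_last al) []"
      using svt2_recurrence[of al "[]"] less.prems by simp
    moreover have "sum_list (dec_last al) < sum_list al"
      using snoc less.prems by (simp add: dec_last_def)
    ultimately show ?thesis
      using less.hyps zero_notin_dec_last[OF less.prems] by simp
  qed (simp add: svt2_Nil)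
qed

section \<open>Emptying the second row\<close>

text \<open>Removing the largest entry from the end of the second row over and over turns bl into exactly
  the lists trunc_sum bl w, w = sum_list bl, ..., 0.\<close>

fun trunc_sum :: "nat list \<Rightarrow> nat \<Rightarrow> nat list" where
  "trunc_sum [] w = []"
| "trunc_sum (x # xs) w = (if w = 0 then [] else if w \<le> x then [w] else x # trunc_sum xs (w - x))"

lemma trunc_sum_0 [simp]: "trunc_sum xs 0 = []"
  by (cases xs) auto

lemma zero_notin_trunc_sum: "0 \<notin> set xs \<Longrightarrow> 0 \<notin> set (trunc_sum xs w)"
  by (induction xs w rule: trunc_sum.induct) auto

lemma trunc_sum_sum_list: "0 \<notin> set xs \<Longrightarrow> trunc_sum xs (sum_list xs) = xs"
proof (induction xs)
  case (Cons x xs)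
  show ?case
  proof (cases "xs = []")
    case False
    then have "0 < sum_list xs" using Cons.prems by (cases xs) auto
    then have "x + sum_list xs \<noteq> 0" "\<not> x + sum_list xs \<le> x" by linarith+
    then have "trunc_sum (x # xs) (x + sum_list xs) = x # trunc_sum xs (sum_list xs)"
      by (simp only: trunc_sum.simps if_False add_diff_cancel_left')
    then show ?thesis using Cons by simp
  qed (use Cons.prems in simp)
qed simp

lemma length_trunc_sum_le_iff:
  assumes "0 \<notin> set xs" "w \<le> sum_list xs"
  shows "length (trunc_sum xs w) \<le> k \<longleftrightarrow> w \<le> sum_list (take k xs)"
  using assms
proof (induction xs arbitrary: w k)
  case (Cons x xs)
  show ?case
  proof (cases "w = 0 \<or> w \<le> x")
    case True
    then show ?thesis using Cons.prems by (cases k) auto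
  next
    case False
    then show ?thesis using Cons.IH[of "w - x"] Cons.prems by (cases k) auto
  qed
qed simp

lemma length_trunc_sum_mono:
  assumes "0 \<notin> set xs" "v \<le> w" "w \<le> sum_list xs"
  shows "length (trunc_sum xs v) \<le> length (trunc_sum xs w)"
proof -
  have "w \<le> sum_list (take (length (trunc_sum xs w)) xs)"
    using length_trunc_sum_le_iff[OF assms(1,3)] by blast
  then show ?thesis using length_trunc_sum_le_iff[OF assms(1), of v] assms(2,3) by simp
qed

lemma trunc_sum_eq_Nil_iff: "0 \<notin> set xs \<Longrightarrow> w \<le> sum_list xs \<Longrightarrow> trunc_sum xs w = [] \<longleftrightarrow> w = 0"
  using length_trunc_sum_le_iff[of xs w 0] by auto

lemma dec_last_trunc_sum:
  assumes "0 \<notin> set xs" "Suc v \<le> sum_list xs"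
  shows "dec_last (trunc_sum xs (Suc v)) = trunc_sum xs v"
  using assms
proof (induction xs arbitrary: v)
  case (Cons x xs)
  show ?case
  proof (cases "Suc v \<le> x")
    case True
    then show ?thesis by (simp add: dec_last_def)
  next
    case False
    then obtain u where u: "Suc v - x = Suc u" "v - x = u" by (metis Suc_diff_le not_less_eq_eq)
    have u_le: "Suc u \<le> sum_list xs" using Cons.prems u False by auto
    have "trunc_sum xs (Suc u) \<noteq> []" using trunc_sum_eq_Nil_iff[of xs "Suc u"] Cons.prems u_le by simp
    then have "dec_last (trunc_sum (x # xs) (Suc v)) = x # dec_last (trunc_sum xs (Suc u))"
      using False u by (simp add: dec_last_Cons)
    also have "\<dots> = trunc_sum (x # xs) v" using Cons.IH[of u] Cons.prems u_le False u by auto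
    finally show ?thesis .
  qed
qed simp

text \<open>The number of tableaux counted by svt2 al bl whose largest entry lies in the first row.\<close>

definition svt2_max_row1 :: "nat list \<Rightarrow> nat list \<Rightarrow> nat" where
  "svt2_max_row1 al bl = (if length bl < length al then svt2 (dec_last al) bl else 0)"

lemma svt2_trunc_sum:
  assumes al: "al \<noteq> []" "0 \<notin> set al" and bl: "0 \<notin> set bl"
    and w: "w \<le> sum_list bl" and len: "length (trunc_sum bl w) \<le> length al"
  shows "svt2 al (trunc_sum bl w) = (\<Sum>v\<le>w. svt2_max_row1 al (trunc_sum bl v))"
  using w len
proof (induction w)
  case 0
  then show ?case using svt2_recurrence[OF al, of "[]"] by (simp add: svt2_max_row1_def)
next
  case (Suc w)
  have "trunc_sum bl (Suc w) \<noteq> []" using trunc_sum_eq_Nil_iff[OF bl Suc.prems(1)] by simp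
  then have "svt2 al (trunc_sum bl (Suc w)) = svt2_max_row1 al (trunc_sum bl (Suc w)) + svt2 al (trunc_sum bl w)"
    using svt2_recurrence[OF al zero_notin_trunc_sum[OF bl] Suc.prems(2)] dec_last_trunc_sum[OF bl Suc.prems(1)]
    by (simp add: svt2_max_row1_def)
  moreover have "length (trunc_sum bl w) \<le> length al"
    using length_trunc_sum_mono[OF bl _ Suc.prems(1), of w] Suc.prems(2) by simp
  ultimately show ?case using Suc by simp
qed

lemma sum_convolution_choose:
  fixes g :: "nat \<Rightarrow> nat"
  shows "(\<Sum>u\<le>w. \<Sum>v\<le>u. ((r + (u - v)) choose (u - v)) * g v)
       = (\<Sum>v\<le>w. ((Suc r + (w - v)) choose (w - v)) * g v)"
proof (induction w)
  case (Suc w)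
  have "(\<Sum>v\<le>Suc w. ((Suc r + (Suc w - v)) choose (Suc w - v)) * g v)
      = (\<Sum>v\<le>w. ((Suc r + Suc (w - v)) choose Suc (w - v)) * g v) + g (Suc w)"
    by (simp add: Suc_diff_le)
  also have "\<dots> = (\<Sum>v\<le>w. ((Suc r + (w - v)) choose (w - v)) * g v)
      + (\<Sum>v\<le>w. ((r + Suc (w - v)) choose Suc (w - v)) * g v) + g (Suc w)"
    by (simp add: sum.distrib[symmetric] algebra_simps)
  moreover have "(\<Sum>v\<le>Suc w. ((r + (Suc w - v)) choose (Suc w - v)) * g v)
      = (\<Sum>v\<le>w. ((r + Suc (w - v)) choose Suc (w - v)) * g v) + g (Suc w)"
    by (simp add: Suc_diff_le)
  ultimately show ?case using Suc.IH by simp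
qed simp

lemma svt2_max_row1_snoc:
  assumes al: "al \<noteq> []" "0 \<notin> set al" and bl: "0 \<notin> set bl" and x: "1 \<le> x" and w: "w \<le> sum_list bl"
  shows "svt2_max_row1 (al @ [x]) (trunc_sum bl w) = (if length (trunc_sum bl w) \<le> length al
           then (\<Sum>v\<le>w. ((x - 1 + (w - v)) choose (w - v)) * svt2_max_row1 al (trunc_sum bl v)) else 0)"
  using x w
proof (induction x arbitrary: w)
  case (Suc x)
  show ?case
  proof (cases "length (trunc_sum bl w) \<le> length al")
    case len: True
    have len_le: "length (trunc_sum bl u) \<le> length al" if "u \<le> w" for u
      using length_trunc_sum_mono[OF bl that Suc.prems(2)] len by simp
    show ?thesis
    proof (cases "x = 0")
      case True
      then have "svt2_max_row1 (al @ [Suc x]) (trunc_sum bl w) = svt2 al (trunc_sum bl w)"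
        using len by (simp add: svt2_max_row1_def dec_last_snoc)
      then show ?thesis using svt2_trunc_sum[OF al bl Suc.prems(2) len] True len by simp
    next
      case False
      have al': "al @ [x] \<noteq> []" "0 \<notin> set (al @ [x])" using al False by auto
      have "svt2_max_row1 (al @ [Suc x]) (trunc_sum bl w) = svt2 (al @ [x]) (trunc_sum bl w)"
        using len False by (simp add: svt2_max_row1_def dec_last_snoc)
      also have "\<dots> = (\<Sum>u\<le>w. svt2_max_row1 (al @ [x]) (trunc_sum bl u))"
        using svt2_trunc_sum[OF al' bl Suc.prems(2)] len by simp
      also have "\<dots> = (\<Sum>u\<le>w. \<Sum>v\<le>u. ((x - 1 + (u - v)) choose (u - v)) * svt2_max_row1 al (trunc_sum bl v))"
        using Suc.IH Suc.prems(2) False len_le by (intro sum.cong) auto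
      also have "\<dots> = (\<Sum>v\<le>w. ((x + (w - v)) choose (w - v)) * svt2_max_row1 al (trunc_sum bl v))"
        using sum_convolution_choose[where r = "x - 1"] False by simp
      finally show ?thesis using len by simp
    qed
  qed (simp add: svt2_max_row1_def)
qed simp

section \<open>Dominated tuples\<close>

definition dominated :: "nat list \<Rightarrow> nat \<Rightarrow> nat list set" where
  "dominated bl m = {ks. length ks = m \<and> (\<forall>l\<le>m. sum_list (take l ks) \<le> sum_list (take l bl))}"

text \<open>Lists are 0-indexed: al ! Suc k is the paper's a_(k+2) and ks ! k is i_(k+1).\<close>

definition weight :: "nat list \<Rightarrow> nat list \<Rightarrow> nat" where
  "weight al ks = (\<Prod>k<length ks. (al ! Suc k + ks ! k - 1) choose (ks ! k))"

lemma weight_snoc: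
  assumes "length al = Suc (length ks)"
  shows "weight (al @ [x]) (ks @ [t]) = weight al ks * ((x + t - 1) choose t)"
proof -
  have "(\<Prod>k<length ks. ((al @ [x]) ! Suc k + (ks @ [t]) ! k - 1) choose ((ks @ [t]) ! k)) = weight al ks"
    unfolding weight_def using assms by (intro prod.cong) (auto simp: nth_append)
  then show ?thesis using assms by (simp add: weight_def nth_append)
qed

lemma sum_list_le_of_dominated: "ks \<in> dominated bl m \<Longrightarrow> sum_list ks \<le> sum_list bl"
proof -
  assume "ks \<in> dominated bl m"
  then have "sum_list (take m ks) \<le> sum_list (take m bl)" "length ks = m"
    unfolding dominated_def by auto
  moreover have "sum_list (take m bl) \<le> sum_list bl"
    by (metis append_take_drop_id sum_list_append le_add1)
  ultimately show "sum_list ks \<le> sum_list bl" by simp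
qed

lemma finite_dominated: "finite (dominated bl m)"
proof (rule finite_subset)
  show "dominated bl m \<subseteq> {ks. set ks \<subseteq> {..sum_list bl} \<and> length ks = m}"
  proof
    fix ks assume ks: "ks \<in> dominated bl m"
    have "set ks \<subseteq> {..sum_list bl}"
      using member_le_sum_list sum_list_le_of_dominated[OF ks] by force
    then show "ks \<in> {ks. set ks \<subseteq> {..sum_list bl} \<and> length ks = m}"
      using ks unfolding dominated_def by simp
  qed
  show "finite {ks. set ks \<subseteq> {..sum_list bl} \<and> length ks = m}"
    by (rule finite_lists_length_eq) simp
qed

lemma dominated_0: "{ks \<in> dominated bl 0. sum_list ks = w} = (if w = 0 then {[]} else {})"
  unfolding dominated_def by auto

lemma dominated_Suc:
  "{ks \<in> dominated bl (Suc m). sum_list ks = w} = (if w \<le> sum_list (take (Suc m) bl)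
     then (\<Union>v\<le>w. (\<lambda>js. js @ [w - v]) ` {js \<in> dominated bl m. sum_list js = v}) else {})"
    (is "?lhs = ?rhs")
proof
  show "?lhs \<subseteq> ?rhs"
  proof
    fix ks assume ks: "ks \<in> ?lhs"
    then obtain js t where ks_eq: "ks = js @ [t]" and len: "length js = m"
      unfolding dominated_def by (cases ks rule: rev_cases) auto
    have prefix: "sum_list (take l (js @ [t])) \<le> sum_list (take l bl)" if "l \<le> Suc m" for l
      using ks that unfolding ks_eq dominated_def by blast
    have "sum_list (take l js) \<le> sum_list (take l bl)" if "l \<le> m" for l
      using prefix[of l] that len by simp
    then have "js \<in> dominated bl m"
      unfolding dominated_def using len by simp
    moreover have "w \<le> sum_list (take (Suc m) bl)"
      using ks prefix[of "Suc m"] len unfolding ks_eq by simp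
    ultimately show "ks \<in> ?rhs" using ks unfolding ks_eq by force
  qed
  show "?rhs \<subseteq> ?lhs"
  proof
    fix ks assume "ks \<in> ?rhs"
    then obtain v js where "w \<le> sum_list (take (Suc m) bl)" "v \<le> w" "js \<in> dominated bl m"
      "sum_list js = v" "ks = js @ [w - v]"
      by (auto split: if_splits)
    then show "ks \<in> ?lhs" unfolding dominated_def by (auto simp: le_Suc_eq)
  qed
qed

lemma sum_weight_dominated_Suc:
  assumes "length al = Suc m"
  shows "(\<Sum>ks | ks \<in> dominated bl (Suc m) \<and> sum_list ks = w. weight (al @ [x]) ks)
    = (if w \<le> sum_list (take (Suc m) bl) then (\<Sum>v\<le>w. ((x + (w - v) - 1) choose (w - v))
         * (\<Sum>js | js \<in> dominated bl m \<and> sum_list js = v. weight al js)) else 0)"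
proof (cases "w \<le> sum_list (take (Suc m) bl)")
  case True
  let ?D = "\<lambda>v. {js \<in> dominated bl m. sum_list js = v}"
  have "(\<Sum>ks\<in>(\<Union>v\<le>w. (\<lambda>js. js @ [w - v]) ` ?D v). weight (al @ [x]) ks)
      = (\<Sum>v\<le>w. \<Sum>ks\<in>(\<lambda>js. js @ [w - v]) ` ?D v. weight (al @ [x]) ks)"
    by (rule sum.UNION_disjoint) (auto simp: finite_dominated)
  also have "\<dots> = (\<Sum>v\<le>w. \<Sum>js\<in>?D v. weight (al @ [x]) (js @ [w - v]))"
    by (intro sum.cong refl sum.reindex[unfolded comp_def] inj_onI) simp
  also have "\<dots> = (\<Sum>v\<le>w. ((x + (w - v) - 1) choose (w - v)) * (\<Sum>js\<in>?D v. weight al js))"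
    using assms by (simp add: sum_distrib_left weight_snoc dominated_def mult.commute)
  finally show ?thesis using True by (simp add: dominated_Suc)
qed (simp add: dominated_Suc)

lemma svt2_max_row1_trunc_sum:
  assumes "al \<noteq> []" "0 \<notin> set al" "0 \<notin> set bl" "w \<le> sum_list bl"
  shows "svt2_max_row1 al (trunc_sum bl w)
       = (\<Sum>ks | ks \<in> dominated bl (length al - 1) \<and> sum_list ks = w. weight al ks)"
  using assms
proof (induction al arbitrary: w rule: rev_induct)
  case (snoc x al)
  have x: "1 \<le> x" and bl: "0 \<notin> set bl" using snoc.prems by auto
  show ?case
  proof (cases "al = []")
    case True
    have "trunc_sum bl w = [] \<longleftrightarrow> w = 0" using trunc_sum_eq_Nil_iff[OF bl snoc.prems(4)] .
    moreover have "svt2 (dec_last [x]) [] = 1" using svt2_one_row zero_notin_dec_last x by simp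
    ultimately show ?thesis using True by (simp add: svt2_max_row1_def dominated_0 weight_def)
  next
    case False
    then obtain m where m: "length al = Suc m" by (cases al) auto
    have IH: "svt2_max_row1 al (trunc_sum bl v)
        = (\<Sum>ks | ks \<in> dominated bl m \<and> sum_list ks = v. weight al ks)" if "v \<le> w" for v
      using snoc.IH[of v] snoc.prems False m that by simp
    have "svt2_max_row1 (al @ [x]) (trunc_sum bl w) = (if length (trunc_sum bl w) \<le> length al
        then (\<Sum>v\<le>w. ((x - 1 + (w - v)) choose (w - v)) * svt2_max_row1 al (trunc_sum bl v)) else 0)"
      using svt2_max_row1_snoc[OF False _ bl x snoc.prems(4)] snoc.prems(2) by simp
    also have "\<dots> = (if w \<le> sum_list (take (Suc m) bl) then (\<Sum>v\<le>w. ((x + (w - v) - 1) choose (w - v))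
         * (\<Sum>ks | ks \<in> dominated bl m \<and> sum_list ks = v. weight al ks)) else 0)"
    proof -
      have "(\<Sum>v\<le>w. ((x - 1 + (w - v)) choose (w - v)) * svt2_max_row1 al (trunc_sum bl v))
          = (\<Sum>v\<le>w. ((x + (w - v) - 1) choose (w - v))
              * (\<Sum>ks | ks \<in> dominated bl m \<and> sum_list ks = v. weight al ks))"
        using IH x by (intro sum.cong) auto
      then show ?thesis using length_trunc_sum_le_iff[OF bl snoc.prems(4)] m by simp
    qed
    also have "\<dots> = (\<Sum>ks | ks \<in> dominated bl (Suc m) \<and> sum_list ks = w. weight (al @ [x]) ks)"
      by (rule sum_weight_dominated_Suc[OF m, symmetric])
    finally show ?thesis using m by simp
  qed
qed simp

lemma svt2_eq_sum_weight_dominated: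
  assumes al: "al \<noteq> []" "0 \<notin> set al" and bl: "0 \<notin> set bl" and len: "length bl \<le> length al"
  shows "svt2 al bl = (\<Sum>ks\<in>dominated bl (length al - 1). weight al ks)"
proof -
  have "svt2 al bl = (\<Sum>w\<le>sum_list bl. svt2_max_row1 al (trunc_sum bl w))"
    using svt2_trunc_sum[OF al bl order_refl] trunc_sum_sum_list[OF bl] len by simp
  also have "\<dots> = (\<Sum>w\<le>sum_list bl. \<Sum>ks | ks \<in> dominated bl (length al - 1) \<and> sum_list ks = w. weight al ks)"
    using svt2_max_row1_trunc_sum[OF al bl] by simp
  also have "\<dots> = (\<Sum>ks\<in>dominated bl (length al - 1). weight al ks)"
    by (rule sum.group) (auto simp: finite_dominated sum_list_le_of_dominated)
  finally show ?thesis .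
qed

lemma card_SVT_two_rows:
  "card (SVT [n1, n2] (\<lambda>(i, j). if i = 1 then a j else if i = 2 then b j else 0))
     = svt2 (map a [1..<Suc n1]) (map b [1..<Suc n2])"
proof -
  have "SVT [n1, n2] (\<lambda>(i, j). if i = 1 then a j else if i = 2 then b j else 0)
      = SVT [n1, n2] (two_row_dens (map a [1..<Suc n1]) (map b [1..<Suc n2]))"
    by (rule SVT_cong) (auto simp: two_row_dens_def simp del: upt_Suc)
  then show ?thesis unfolding svt2_def by (simp del: upt_Suc)
qed

lemma sum_list_take_eq_sum_nth:
  "l \<le> length xs \<Longrightarrow> sum_list (take l xs) = (\<Sum>j=1..l. xs ! (j - 1))"
  by (simp add: sum_list_sum_nth atLeast0LessThan sum.atLeast1_atMost_eq)

lemma sum_list_take_map_upt: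
  "sum_list (take l (map b [1..<Suc n])) = (\<Sum>j=1..l. if j \<le> n then b j else 0)"
proof -
  have "take l (map b [1..<Suc n]) = map b [1..<Suc (min l n)]"
    by (cases "l \<le> n") (simp_all add: take_map take_upt min_def del: upt_Suc)
  moreover have "(\<Sum>j=1..l. if j \<le> n then b j else 0) = (\<Sum>j=1..min l n. b j)"
    by (simp add: sum.If_cases Int_def min_def) (auto intro: sum.cong)
  ultimately show ?thesis
    by (simp add: sum_set_upt_conv_sum_list_nat[symmetric] atLeastLessThanSuc_atLeastAtMost del: upt_Suc)
qed

lemma zero_notin_map_upt:
  fixes f :: "nat \<Rightarrow> nat"
  assumes "\<forall>j\<in>{1..n}. 0 < f j"
  shows "0 \<notin> set (map f [1..<Suc n])"
proof
  assume "0 \<in> set (map f [1..<Suc n])"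
  then have "0 \<in> f ` {1..n}" by (simp add: atLeastLessThanSuc_atLeastAtMost del: upt_Suc)
  with assms show False by fastforce
qed

lemma dominated_map_upt:
  "dominated (map b [1..<Suc n]) m = {ks. length ks = m \<and>
     (\<forall>l\<in>{1..m}. (\<Sum>j=1..l. ks ! (j - 1)) \<le> (\<Sum>j=1..l. if j \<le> n then b j else 0))}"
proof -
  have "(\<forall>l\<le>m. sum_list (take l ks) \<le> sum_list (take l (map b [1..<Suc n])))
    \<longleftrightarrow> (\<forall>l\<in>{1..m}. (\<Sum>j=1..l. ks ! (j - 1)) \<le> (\<Sum>j=1..l. if j \<le> n then b j else 0))"
    if "length ks = m" for ks
  proof -
    let ?Q = "\<lambda>l. (\<Sum>j=1..l. ks ! (j - 1)) \<le> (\<Sum>j=1..l. if j \<le> n then b j else 0)"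
    have "sum_list (take l ks) \<le> sum_list (take l (map b [1..<Suc n])) \<longleftrightarrow> ?Q l" if "l \<le> m" for l
      using that \<open>length ks = m\<close> sum_list_take_eq_sum_nth[of l ks] sum_list_take_map_upt[of l b n]
      by simp
    then have "(\<forall>l\<le>m. sum_list (take l ks) \<le> sum_list (take l (map b [1..<Suc n])))
        \<longleftrightarrow> (\<forall>l\<le>m. ?Q l)" by blast
    also have "\<dots> \<longleftrightarrow> (\<forall>l\<in>{1..m}. ?Q l)"
    proof
      assume Q: "\<forall>l\<in>{1..m}. ?Q l"
      show "\<forall>l\<le>m. ?Q l"
      proof (intro allI impI)
        fix l assume "l \<le> m"
        show "?Q l"
        proof (cases "l = 0")
          case False
          then have "l \<in> {1..m}" using \<open>l \<le> m\<close> by simp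
          then show ?thesis using Q by blast
        qed simp
      qed
    qed simp
    finally show ?thesis .
  qed
  then show ?thesis unfolding dominated_def by (intro Collect_cong) blast
qed

lemma weight_map_upt:
  assumes "length ks = n - 1"
  shows "weight (map a [1..<Suc n]) ks = (\<Prod>j=1..n - 1. (a (j + 1) + ks ! (j - 1) - 1) choose (ks ! (j - 1)))"
proof -
  have "(\<Prod>j=1..n - 1. (a (j + 1) + ks ! (j - 1) - 1) choose (ks ! (j - 1)))
      = (\<Prod>k<n - 1. (a (Suc k + 1) + ks ! k - 1) choose (ks ! k))"
    using prod.atLeast1_atMost_eq[of "\<lambda>j. (a (j + 1) + ks ! (j - 1) - 1) choose (ks ! (j - 1))" "n - 1"]
    by simp
  also have "\<dots> = weight (map a [1..<Suc n]) ks"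
    unfolding weight_def assms by (intro prod.cong) (auto simp del: upt_Suc)
  finally show ?thesis ..
qed

theorem theorem7:
  fixes n1 n2 :: nat and a b :: "nat \<Rightarrow> nat"
  assumes "n1 \<ge> n2" and "n2 \<ge> 1" and "n1 \<ge> 2"
    and "\<forall>j\<in>{1..n1}. a j > 0"
    and "\<forall>j\<in>{1..n2}. b j > 0"
  shows "card (SVT [n1, n2]
            (\<lambda>(i, j). if i = 1 then a j else if i = 2 then b j else 0))
       = (\<Sum>is\<in>{is :: nat list. length is = n1 - 1 \<and>
              (\<forall>l\<in>{1..n1 - 1}. (\<Sum>j=1..l. is ! (j - 1))
                   \<le> (\<Sum>j=1..l. if j \<le> n2 then b j else 0))}.
            \<Prod>j=1..n1 - 1. (a (j + 1) + is ! (j - 1) - 1) choose (is ! (j - 1)))"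
proof -
  let ?al = "map a [1..<Suc n1]" and ?bl = "map b [1..<Suc n2]"
  have al: "?al \<noteq> []" "0 \<notin> set ?al" and bl: "0 \<notin> set ?bl"
    using assms(3) zero_notin_map_upt[OF assms(4)] zero_notin_map_upt[OF assms(5)] by auto
  have "card (SVT [n1, n2] (\<lambda>(i, j). if i = 1 then a j else if i = 2 then b j else 0))
      = (\<Sum>ks\<in>dominated ?bl (n1 - 1). weight ?al ks)"
    using card_SVT_two_rows svt2_eq_sum_weight_dominated[OF al bl] assms(1) by simp
  also have "\<dots> = (\<Sum>is\<in>{is :: nat list. length is = n1 - 1 \<and>
              (\<forall>l\<in>{1..n1 - 1}. (\<Sum>j=1..l. is ! (j - 1))
                   \<le> (\<Sum>j=1..l. if j \<le> n2 then b j else 0))}.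
            \<Prod>j=1..n1 - 1. (a (j + 1) + is ! (j - 1) - 1) choose (is ! (j - 1)))"
    unfolding dominated_map_upt by (intro sum.cong refl weight_map_upt) simp
  finally show ?thesis .
qed

end
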